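(* Let $(g,b)$ be a magnetic system without conjugate points on a closed oriented surface $M$. For every $v\in SM$ there exist $c=c(v)>0$ and $r_0=r_0(v)$ such that if $J$ is a perpendicular Jacobi field along $\gamma_v$ with $J(r)=0$ for some $r\ge r_0$, then $|\dot J(0)|\le c\,|J(0)|$. (Equivalently, in the quotient bundle: if $\xi\in Q^b(v)$ satisfies $d\pi(\Phi^r\xi)=0$ for some $r\ge r_0$, then $\|K(\xi)\|\le c\|d\pi(\xi)\|$, where $\|d\pi(\xi)\|=|J_\xi(0)|$ and $\|K(\xi)\|=|\dot J_\xi(0)|$.)
   Context: Magnetic system $(g,b)$: Riemannian metric $g$ (Gaussian curvature $K^g$) and $b\in C^\infty(M)$; $\mathrm{i}$ = rotation by $\pi/2$ by the orientation. For $v\in SM$, $\gamma_v$ is the unit speed curve with $(\gamma_v(0),\dot\gamma_v(0))=v$ and $\frac{D\dot\gamma_v}{dt}=b(\gamma_v)\,\mathrm{i}\dot\gamma_v$; magnetic flow $\phi^t_{g,b}$ on $SM$ with generator $X^b$. Magnetic curvature $\mathbb K^{g,b}(x,v)=K^g(x)-d_xb(\mathrm{i}v)+b(x)^2$. Perpendicular Jacobi field along $\gamma_v$: $J:\mathbb R\to\mathbb R$ with $\ddot J+\mathbb K^{g,b}(\gamma_v(t),\dot\gamma_v(t))J=0$. Without conjugate points: for all $v$, every nontrivial perpendicular Jacobi field $J$ along $\gamma_v$ with $J(0)=0$ satisfies $J(t)\ne0$ for $t\ne0$. Quotient bundle $Q^b(v)=T_vSM/\mathbb RX^b(v)$ with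 flow $\Phi^t$ induced by $d\phi^t_{g,b}$; $\xi\in Q^b(v)$ corresponds bijectively to a perpendicular Jacobi field $J_\xi$ along $\gamma_v$, with $J_{\Phi^t\xi}(s)=J_\xi(t+s)$. *)

theory Defs
  imports "HOL-Analysis.Analysis"
begin

text \<open>Abstract model of a magnetic system on a closed oriented surface, reduced to
  the data the statement depends on:
  SM (unit tangent bundle, elements of type 'v), the magnetic flow phi on SM,
  and the magnetic curvature function KK on SM (KK v = K^g(x) - d_x b(i v) + b(x)^2).
  The perpendicular Jacobi equation along gamma_v has coefficient
  t maps to KK (phi t v), since (gamma_v(t), gamma_v'(t)) = phi t v.\<close>

definition is_flow :: "'v set \<Rightarrow> (real \<Rightarrow> 'v \<Rightarrow> 'v) \<Rightarrow> bool" where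
  "is_flow SM phi \<longleftrightarrow>
     (\<forall>v\<in>SM. phi 0 v = v) \<and>
     (\<forall>v\<in>SM. \<forall>t. phi t v \<in> SM) \<and>
     (\<forall>v\<in>SM. \<forall>s t. phi (s + t) v = phi s (phi t v))"

text \<open>Standing regularity coming from M closed and (g,b) smooth: the magnetic curvature
  is bounded on SM and continuous along every flow line.\<close>
definition magnetic_system :: "'v set \<Rightarrow> (real \<Rightarrow> 'v \<Rightarrow> 'v) \<Rightarrow> ('v \<Rightarrow> real) \<Rightarrow> bool" where
  "magnetic_system SM phi KK \<longleftrightarrow>
     is_flow SM phi \<and>
     (\<exists>B. \<forall>v\<in>SM. \<bar>KK v\<bar> \<le> B) \<and>
     (\<forall>v\<in>SM. continuous_on UNIV (\<lambda>t. KK (phi t v)))"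

definition perp_jacobi ::
  "(real \<Rightarrow> 'v \<Rightarrow> 'v) \<Rightarrow> ('v \<Rightarrow> real) \<Rightarrow> 'v \<Rightarrow> (real \<Rightarrow> real) \<Rightarrow> (real \<Rightarrow> real) \<Rightarrow> bool" where
  "perp_jacobi phi KK v J J' \<longleftrightarrow>
     (\<forall>t. (J has_real_derivative J' t) (at t) \<and>
          (J' has_real_derivative (- KK (phi t v) * J t)) (at t))"

definition no_conjugate_points :: "'v set \<Rightarrow> (real \<Rightarrow> 'v \<Rightarrow> 'v) \<Rightarrow> ('v \<Rightarrow> real) \<Rightarrow> bool" where
  "no_conjugate_points SM phi KK \<longleftrightarrow>
     (\<forall>v\<in>SM. \<forall>J J'. perp_jacobi phi KK v J J' \<and> J 0 = 0 \<and> (\<exists>s. J s \<noteq> 0)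
        \<longrightarrow> (\<forall>t. t \<noteq> 0 \<longrightarrow> J t \<noteq> 0))"

end

theory Submission
  imports Defs
begin

text \<open>Sturm comparison. Let \<open>K \<ge> -B\<close>. If a solution \<open>J\<close> of \<open>J'' + K J = 0\<close> had
  \<open>J'(0) < -2(1+B) J(0)\<close> and stayed positive on \<open>[0,1]\<close>, compare it with the parabola
  \<open>z(t) = J(0) (1 - (1+B) t)\<^sup>2\<close>, which satisfies \<open>z'' + K z \<ge> 0\<close> and vanishes at
  \<open>a = 1/(1+B) \<le> 1\<close>: the Wronskian \<open>J z' - J' z\<close> starts nonnegative and is nondecreasing, so
  \<open>z/J\<close> is nondecreasing on \<open>[0,a]\<close>, contradicting \<open>z(0)/J(0) = 1 > 0 = z(a)/J(a)\<close>.
  Negating and reflecting \<open>J\<close> gives \<open>|J'(0)| \<le> 2(1+B)|J(0)|\<close> whenever \<open>J\<close> has no zero in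
  \<open>[-1,1]\<close>. Without conjugate points a nontrivial Jacobi field has at most one zero, so a
  zero at some \<open>r \<ge> 2\<close> leaves \<open>[-1,1]\<close> free of zeros.\<close>

definition jacobi_solution :: "(real \<Rightarrow> real) \<Rightarrow> (real \<Rightarrow> real) \<Rightarrow> (real \<Rightarrow> real) \<Rightarrow> bool" where
  "jacobi_solution K J J' \<longleftrightarrow>
     (\<forall>t. (J has_real_derivative J' t) (at t) \<and> (J' has_real_derivative - K t * J t) (at t))"

lemma perp_jacobi_iff_jacobi_solution:
  "perp_jacobi phi KK v J J' \<longleftrightarrow> jacobi_solution (\<lambda>t. KK (phi t v)) J J'"
  by (simp add: perp_jacobi_def jacobi_solution_def)

lemma jacobi_solutionD:
  assumes "jacobi_solution K J J'"
  shows "(J has_real_derivative J' t) (at t)" "(J' has_real_derivative - K t * J t) (at t)"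
  using assms by (simp_all add: jacobi_solution_def)

lemma jacobi_solution_uminus:
  assumes "jacobi_solution K J J'"
  shows "jacobi_solution K (\<lambda>t. - J t) (\<lambda>t. - J' t)"
  using jacobi_solutionD[OF assms]
  by (auto simp: jacobi_solution_def intro!: derivative_eq_intros)

lemma jacobi_solution_reflect:
  assumes "jacobi_solution K J J'"
  shows "jacobi_solution (\<lambda>t. K (- t)) (\<lambda>t. J (- t)) (\<lambda>t. - J' (- t))"
  unfolding jacobi_solution_def
proof
  fix t
  have "((\<lambda>t. J (- t)) has_real_derivative J' (- t) * (- 1)) (at t)"
    by (rule DERIV_chain2[OF jacobi_solutionD(1)[OF assms]]) (auto intro!: derivative_eq_intros)
  moreover have "((\<lambda>t. J' (- t)) has_real_derivative (- K (- t) * J (- t)) * (- 1)) (at t)"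
    by (rule DERIV_chain2[OF jacobi_solutionD(2)[OF assms]]) (auto intro!: derivative_eq_intros)
  then have "((\<lambda>t. - J' (- t)) has_real_derivative - ((- K (- t) * J (- t)) * (- 1))) (at t)"
    by (rule DERIV_minus)
  ultimately show "((\<lambda>t. J (- t)) has_real_derivative - J' (- t)) (at t) \<and>
      ((\<lambda>t. - J' (- t)) has_real_derivative - K (- t) * J (- t)) (at t)"
    by simp
qed

lemma jacobi_solution_shift:
  assumes "jacobi_solution K J J'"
  shows "jacobi_solution (\<lambda>t. K (t + r)) (\<lambda>t. J (t + r)) (\<lambda>t. J' (t + r))"
  unfolding jacobi_solution_def
  using jacobi_solutionD[OF assms] by (simp add: DERIV_shift[symmetric])

lemma jacobi_solution_zero_deriv:
  assumes "jacobi_solution K J J'" and "\<And>t. J t = 0"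
  shows "J' t = 0"
proof -
  have "J = (\<lambda>_. 0)" using assms(2) by blast
  then have "((\<lambda>_. 0) has_real_derivative J' t) (at t)"
    using jacobi_solutionD(1)[OF assms(1), of t] by simp
  then show ?thesis using DERIV_const DERIV_unique by blast
qed

lemma quotient_mono_if_wronskian_nonneg:
  fixes J J' z z' :: "real \<Rightarrow> real"
  assumes "s \<le> t"
    and "\<And>x. (J has_real_derivative J' x) (at x)" "\<And>x. (z has_real_derivative z' x) (at x)"
    and "\<And>x. x \<in> {s..t} \<Longrightarrow> J x > 0"
    and "\<And>x. x \<in> {s..t} \<Longrightarrow> J x * z' x - J' x * z x \<ge> 0"
  shows "z s / J s \<le> z t / J t"
proof (rule DERIV_nonneg_imp_nondecreasing[OF \<open>s \<le> t\<close>])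
  fix x assume "s \<le> x" "x \<le> t"
  then have "J x > 0" "J x * z' x - J' x * z x \<ge> 0" using assms(4,5) by auto
  moreover have "((\<lambda>x. z x / J x) has_real_derivative
      (z' x * J x - z x * J' x) / (J x * J x)) (at x)"
    using \<open>J x > 0\<close> by (intro DERIV_divide assms(2,3)) auto
  ultimately show "\<exists>y. ((\<lambda>x. z x / J x) has_real_derivative y) (at x) \<and> y \<ge> 0"
    by (intro exI conjI) (auto simp: algebra_simps)
qed

lemma wronskian_mono_if_supersolution:
  fixes J J' z z' z'' K :: "real \<Rightarrow> real"
  assumes "s \<le> t" and J: "jacobi_solution K J J'"
    and "\<And>x. (z has_real_derivative z' x) (at x)" "\<And>x. (z' has_real_derivative z'' x) (at x)"
    and "\<And>x. x \<in> {s..t} \<Longrightarrow> J x \<ge> 0"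
    and "\<And>x. x \<in> {s..t} \<Longrightarrow> z'' x + K x * z x \<ge> 0"
  shows "J s * z' s - J' s * z s \<le> J t * z' t - J' t * z t"
proof (rule DERIV_nonneg_imp_nondecreasing[OF \<open>s \<le> t\<close>])
  fix x assume "s \<le> x" "x \<le> t"
  then have "J x * (z'' x + K x * z x) \<ge> 0" using assms(5,6) by auto
  moreover have "((\<lambda>x. J x * z' x - J' x * z x) has_real_derivative
      J x * (z'' x + K x * z x)) (at x)"
    using jacobi_solutionD[OF J] assms(3,4)
    by (auto intro!: derivative_eq_intros simp: algebra_simps)
  ultimately show "\<exists>y. ((\<lambda>x. J x * z' x - J' x * z x) has_real_derivative y) (at x) \<and> y \<ge> 0"
    by blast
qed

lemma jacobi_slope_lower_bound:
  assumes J: "jacobi_solution K J J'" and "B \<ge> 0" and K: "\<And>t. K t \<ge> - B"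
    and pos: "\<And>t. t \<in> {0..1} \<Longrightarrow> J t > 0"
  shows "J' 0 \<ge> - (2 * (1 + B)) * J 0"
proof (rule ccontr)
  assume steep: "\<not> ?thesis"
  define c where "c = 1 + B"
  define a where "a = 1 / c"
  have "c \<ge> 1" "0 < a" "a \<le> 1" using \<open>B \<ge> 0\<close> by (auto simp: c_def a_def field_simps)
  have "J 0 > 0" using pos by simp
  define z where "z t = J 0 * (1 - c * t)\<^sup>2" for t
  define z' where "z' t = - 2 * c * J 0 * (1 - c * t)" for t
  have dz: "(z has_real_derivative z' x) (at x)" for x
    unfolding z_def z'_def by (auto intro!: derivative_eq_intros simp: power2_eq_square algebra_simps)
  have dz': "(z' has_real_derivative 2 * c\<^sup>2 * J 0) (at x)" for x
    unfolding z'_def by (auto intro!: derivative_eq_intros simp: power2_eq_square)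
  have "2 * c\<^sup>2 * J 0 + K x * z x \<ge> 0" if "x \<in> {0..a}" for x
  proof -
    have "0 \<le> 1 - c * x" "1 - c * x \<le> 1"
      using that \<open>c \<ge> 1\<close> by (auto simp: a_def field_simps)
    then have "0 \<le> z x" "z x \<le> J 0"
      using \<open>J 0 > 0\<close> by (auto simp: z_def power_le_one mult_left_le)
    then have "K x * z x \<ge> - B * z x" "B * z x \<le> B * J 0"
      using mult_right_mono[OF K[of x]] \<open>B \<ge> 0\<close> by (simp_all add: mult_left_mono)
    moreover have "B \<le> 2 * c\<^sup>2" using \<open>B \<ge> 0\<close> by (simp add: c_def power2_eq_square algebra_simps)
    then have "B * J 0 \<le> 2 * c\<^sup>2 * J 0" using \<open>J 0 > 0\<close> by simp
    ultimately show ?thesis by linarith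
  qed
  then have "J 0 * z' 0 - J' 0 * z 0 \<le> J x * z' x - J' x * z x" if "x \<in> {0..a}" for x
    using that pos \<open>a \<le> 1\<close>
    by (intro wronskian_mono_if_supersolution[OF _ J dz dz']) (auto intro: less_imp_le)
  moreover have "J 0 * z' 0 - J' 0 * z 0 = - J 0 * (2 * c * J 0 + J' 0)"
    by (simp add: z_def z'_def algebra_simps)
  moreover have "2 * c * J 0 + J' 0 < 0" using steep by (simp add: c_def algebra_simps)
  then have "- J 0 * (2 * c * J 0 + J' 0) \<ge> 0"
    using \<open>J 0 > 0\<close> by (simp add: mult_pos_neg less_imp_le)
  ultimately have "z 0 / J 0 \<le> z a / J a"
    using pos \<open>a \<le> 1\<close> \<open>0 < a\<close>
    by (intro quotient_mono_if_wronskian_nonneg[OF _ jacobi_solutionD(1)[OF J] dz]) force+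
  moreover have "z 0 / J 0 = 1" "z a = 0"
    using \<open>J 0 > 0\<close> \<open>c \<ge> 1\<close> by (simp_all add: z_def a_def)
  ultimately show False by simp
qed

lemma continuous_nonvanishing_keeps_sign:
  fixes f :: "real \<Rightarrow> real"
  assumes "continuous_on {a..b} f" and "\<And>x. x \<in> {a..b} \<Longrightarrow> f x \<noteq> 0"
    and "f a > 0" and "t \<in> {a..b}"
  shows "f t > 0"
proof (rule ccontr)
  assume "\<not> f t > 0"
  moreover have "continuous_on {a..t} f" by (rule continuous_on_subset[OF assms(1)]) (use assms(4) in auto)
  ultimately obtain x where "a \<le> x" "x \<le> t" "f x = 0"
    using IVT2'[of f t 0 a] assms(3,4) by auto
  then show False using assms(2,4) by auto
qed

lemma jacobi_slope_one_sided_bound: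
  assumes J: "jacobi_solution K J J'" and "B \<ge> 0" and K: "\<And>t. K t \<ge> - B"
    and nz: "\<And>t. t \<in> {0..1} \<Longrightarrow> J t \<noteq> 0"
  shows "J' 0 * J 0 \<ge> - (2 * (1 + B)) * (J 0)\<^sup>2"
proof -
  have cont: "continuous_on {0..1} f" if "jacobi_solution K f f'" for f f'
    using jacobi_solutionD(1)[OF that]
    by (meson DERIV_continuous continuous_at_imp_continuous_on)
  consider "J 0 > 0" | "- J 0 > 0" using nz[of 0] by fastforce
  then show ?thesis
  proof cases
    case 1
    then have "J' 0 \<ge> - (2 * (1 + B)) * J 0"
      using continuous_nonvanishing_keeps_sign[OF cont[OF J]] nz
      by (intro jacobi_slope_lower_bound[OF J \<open>B \<ge> 0\<close> K]) auto
    then have "J' 0 * J 0 \<ge> (- (2 * (1 + B)) * J 0) * J 0" using 1 by (intro mult_right_mono) auto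
    then show ?thesis by (simp add: power2_eq_square)
  next
    case 2
    have J_neg: "jacobi_solution K (\<lambda>t. - J t) (\<lambda>t. - J' t)"
      by (rule jacobi_solution_uminus[OF J])
    then have "- J' 0 \<ge> - (2 * (1 + B)) * (- J 0)"
      using continuous_nonvanishing_keeps_sign[OF cont[OF J_neg]] nz 2
      by (intro jacobi_slope_lower_bound[OF J_neg \<open>B \<ge> 0\<close> K]) auto
    then have "- J' 0 * - J 0 \<ge> (- (2 * (1 + B)) * - J 0) * - J 0" using 2 by (intro mult_right_mono) auto
    then show ?thesis by (simp add: power2_eq_square)
  qed
qed

lemma jacobi_slope_bound:
  assumes J: "jacobi_solution K J J'" and "B \<ge> 0" and K: "\<And>t. K t \<ge> - B"
    and nz: "\<And>t. t \<in> {-1..1} \<Longrightarrow> J t \<noteq> 0"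
  shows "\<bar>J' 0\<bar> \<le> 2 * (1 + B) * \<bar>J 0\<bar>"
proof -
  have forward: "J' 0 * J 0 \<ge> - (2 * (1 + B)) * (J 0)\<^sup>2"
    using nz by (intro jacobi_slope_one_sided_bound[OF J \<open>B \<ge> 0\<close> K]) auto
  have backward: "- J' 0 * J 0 \<ge> - (2 * (1 + B)) * (J 0)\<^sup>2"
    using jacobi_slope_one_sided_bound[OF jacobi_solution_reflect[OF J] \<open>B \<ge> 0\<close>] K nz by auto
  have "\<bar>J' 0\<bar> * \<bar>J 0\<bar> \<le> 2 * (1 + B) * \<bar>J 0\<bar> * \<bar>J 0\<bar>"
    using forward backward
    by (cases "J' 0 * J 0 \<ge> 0") (simp_all add: abs_mult[symmetric] power2_eq_square algebra_simps)
  moreover have "J 0 \<noteq> 0" using nz by simp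
  ultimately show ?thesis by simp
qed

lemma perp_jacobi_at_most_one_zero:
  assumes flow: "is_flow SM phi" and ncp: "no_conjugate_points SM phi KK" and "v \<in> SM"
    and J: "perp_jacobi phi KK v J J'" and "J r = 0" and "\<exists>s. J s \<noteq> 0" and "t \<noteq> r"
  shows "J t \<noteq> 0"
proof -
  have w: "phi r v \<in> SM" and shift: "phi s (phi r v) = phi (s + r) v" for s
    using flow \<open>v \<in> SM\<close> by (simp_all add: is_flow_def)
  have "perp_jacobi phi KK (phi r v) (\<lambda>s. J (s + r)) (\<lambda>s. J' (s + r))"
    using jacobi_solution_shift[of _ J J' r] J by (simp add: perp_jacobi_iff_jacobi_solution shift)
  moreover have "\<exists>s. J (s + r) \<noteq> 0" using \<open>\<exists>s. J s \<noteq> 0\<close> by (metis diff_add_cancel)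
  moreover have "t - r \<noteq> 0" using \<open>t \<noteq> r\<close> by simp
  ultimately have "J ((t - r) + r) \<noteq> 0"
    using ncp[unfolded no_conjugate_points_def, rule_format, OF w,
        of "\<lambda>s. J (s + r)" "\<lambda>s. J' (s + r)" "t - r"] \<open>J r = 0\<close>
    by simp
  then show ?thesis by simp
qed

lemma perp_jacobi_slope_bound_of_late_zero:
  assumes flow: "is_flow SM phi" and ncp: "no_conjugate_points SM phi KK" and "v \<in> SM"
    and "B \<ge> 0" and K: "\<And>t. KK (phi t v) \<ge> - B"
    and J: "perp_jacobi phi KK v J J'" and "r \<ge> 2" and "J r = 0"
  shows "\<bar>J' 0\<bar> \<le> 2 * (1 + B) * \<bar>J 0\<bar>"
proof -
  have sol: "jacobi_solution (\<lambda>t. KK (phi t v)) J J'"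
    using J by (simp add: perp_jacobi_iff_jacobi_solution)
  show ?thesis
  proof (cases "\<exists>s. J s \<noteq> 0")
    case True
    have "J t \<noteq> 0" if "t \<in> {-1..1}" for t
      using perp_jacobi_at_most_one_zero[OF flow ncp \<open>v \<in> SM\<close> J \<open>J r = 0\<close> True] \<open>r \<ge> 2\<close> that
      by auto
    then show ?thesis by (rule jacobi_slope_bound[OF sol \<open>B \<ge> 0\<close> K])
  next
    case False
    then have "J' 0 = 0" by (intro jacobi_solution_zero_deriv[OF sol]) simp
    then show ?thesis using \<open>B \<ge> 0\<close> by simp
  qed
qed

lemma magnetic_curvature_bounded_below:
  assumes "magnetic_system SM phi KK"
  obtains B where "B \<ge> 0" "\<And>v t. v \<in> SM \<Longrightarrow> KK (phi t v) \<ge> - B"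
proof -
  obtain B0 where B0: "\<forall>w\<in>SM. \<bar>KK w\<bar> \<le> B0" using assms by (auto simp: magnetic_system_def)
  have "phi t v \<in> SM" if "v \<in> SM" for v t
    using assms that by (simp add: magnetic_system_def is_flow_def)
  with B0 have "\<bar>KK (phi t v)\<bar> \<le> B0" if "v \<in> SM" for v t
    using that by blast
  then have "KK (phi t v) \<ge> - max B0 0" if "v \<in> SM" for v t
    using that by (metis abs_le_D2 max.cobounded1 minus_le_iff order_trans)
  then show ?thesis by (intro that[of "max B0 0"]) auto
qed

theorem mainTheorem9:
  fixes SM :: "'v set" and phi :: "real \<Rightarrow> 'v \<Rightarrow> 'v" and KK :: "'v \<Rightarrow> real"
  assumes "magnetic_system SM phi KK"
    and "no_conjugate_points SM phi KK"
  shows "\<forall>v\<in>SM. \<exists>c>0. \<exists>r0::real. \<forall>J J' r.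
           perp_jacobi phi KK v J J' \<and> r \<ge> r0 \<and> J r = 0 \<longrightarrow> \<bar>J' 0\<bar> \<le> c * \<bar>J 0\<bar>"
proof
  fix v assume "v \<in> SM"
  obtain B where "B \<ge> 0" and K: "\<And>t. KK (phi t v) \<ge> - B"
    using magnetic_curvature_bounded_below[OF assms(1)] \<open>v \<in> SM\<close> by metis
  have flow: "is_flow SM phi" using assms(1) by (simp add: magnetic_system_def)
  note bound = perp_jacobi_slope_bound_of_late_zero[OF flow assms(2) \<open>v \<in> SM\<close> \<open>B \<ge> 0\<close> K]
  show "\<exists>c>0. \<exists>r0::real. \<forall>J J' r.
      perp_jacobi phi KK v J J' \<and> r \<ge> r0 \<and> J r = 0 \<longrightarrow> \<bar>J' 0\<bar> \<le> c * \<bar>J 0\<bar>"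
    using \<open>B \<ge> 0\<close> bound by (intro exI[of _ "2 * (1 + B)"] conjI exI[of _ 2] allI impI) auto
qed

end
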